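(* Let $N=(X,Y,<)$ be a node of a regular poset $(P,\le,A_1\ldots A_k)$. For every $k\in\mathbb{N}$ the following are equivalent: (1) for every non-empty $A\subseteq X$, $|A{\uparrow}\cap Y|\ge \min\{|A|+k,|Y|\}$; (2) for every non-empty $B\subseteq Y$, $|B{\downarrow}\cap X|\ge\min\{|B|+k,|X|\}$.
   Context: Let $(P,\le)$ be a finite poset of width $w$. For $A\subseteq P$ let $A{\uparrow}=\{y\in P: x\le y\text{ for some }x\in A\}$ and $A{\downarrow}=\{y\in P: y\le x\text{ for some }x\in A\}$. For maximal antichains $A,B$ write $A\sqsubseteq B$ if $A\subseteq B{\downarrow}$, and $A\sqsubset B$ if also $A\ne B$. For disjoint antichains $A\sqsubset B$, $(A,B,<)$ denotes the bipartite graph with classes $A,B$ and an edge $(a<b)$ for each $a\in A$, $b\in B$ with $a<b$; it is regular if every edge lies in some perfect matching. A regular poset is a triple $(P,\le,A_1\ldots A_k)$ where $A_1,\dots,A_k$ are maximum antichains of $P$ such that: they partition $P$; $(\{A_1,\dots,A_k\},\sqsubseteq)$ is a linear order with minimum $A_1$ and maximum $A_2$; $a<b$ for all $a\in A_1$, $b\in A_2$; and for every $t\in[2,k]$ and every two antichains $A_p\sqsubset A_s$ that are consecutive in the linear order $(\{A_1,\dots,A_t\},\sqsubseteq)$, the bipartite graph $(A_p,A_s,<)$ is regular. A node of the regular poset is a bipartite graph $(X,Y,<)$ such that for some $t\in[2,k]$ and some $A_p\sqsubset A_s$ consecutive in $(\{A_1,\dots,A_t\},\sqsubseteq)$, we have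 $X\subseteq A_p$, $Y\subseteq A_s$, and $X\cup Y$ is the vertex set of a connected component of $(A_p,A_s,<)$ (with edges $(x<y)$, $x\in X$, $y\in Y$, $x<y$). *)

theory Defs
  imports Main
begin

definition poset :: "'a set \<Rightarrow> ('a \<Rightarrow> 'a \<Rightarrow> bool) \<Rightarrow> bool" where
  "poset P le \<longleftrightarrow> (\<forall>x\<in>P. le x x)
     \<and> (\<forall>x\<in>P. \<forall>y\<in>P. le x y \<and> le y x \<longrightarrow> x = y)
     \<and> (\<forall>x\<in>P. \<forall>y\<in>P. \<forall>z\<in>P. le x y \<and> le y z \<longrightarrow> le x z)"

definition less_p :: "('a \<Rightarrow> 'a \<Rightarrow> bool) \<Rightarrow> 'a \<Rightarrow> 'a \<Rightarrow> bool" where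
  "less_p le x y \<longleftrightarrow> le x y \<and> x \<noteq> y"

definition up_set :: "'a set \<Rightarrow> ('a \<Rightarrow> 'a \<Rightarrow> bool) \<Rightarrow> 'a set \<Rightarrow> 'a set" where
  "up_set P le A = {y\<in>P. \<exists>x\<in>A. le x y}"

definition down_set :: "'a set \<Rightarrow> ('a \<Rightarrow> 'a \<Rightarrow> bool) \<Rightarrow> 'a set \<Rightarrow> 'a set" where
  "down_set P le A = {y\<in>P. \<exists>x\<in>A. le y x}"

definition antichain :: "'a set \<Rightarrow> ('a \<Rightarrow> 'a \<Rightarrow> bool) \<Rightarrow> 'a set \<Rightarrow> bool" where
  "antichain P le A \<longleftrightarrow> A \<subseteq> P \<and> (\<forall>x\<in>A. \<forall>y\<in>A. le x y \<longrightarrow> x = y)"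

definition width :: "'a set \<Rightarrow> ('a \<Rightarrow> 'a \<Rightarrow> bool) \<Rightarrow> nat" where
  "width P le = Max (card ` {A. antichain P le A})"

definition maximum_antichain :: "'a set \<Rightarrow> ('a \<Rightarrow> 'a \<Rightarrow> bool) \<Rightarrow> 'a set \<Rightarrow> bool" where
  "maximum_antichain P le A \<longleftrightarrow> antichain P le A \<and> card A = width P le"

definition sq_le :: "'a set \<Rightarrow> ('a \<Rightarrow> 'a \<Rightarrow> bool) \<Rightarrow> 'a set \<Rightarrow> 'a set \<Rightarrow> bool" where
  "sq_le P le A B \<longleftrightarrow> A \<subseteq> down_set P le B"

definition sq_less :: "'a set \<Rightarrow> ('a \<Rightarrow> 'a \<Rightarrow> bool) \<Rightarrow> 'a set \<Rightarrow> 'a set \<Rightarrow> bool" where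
  "sq_less P le A B \<longleftrightarrow> sq_le P le A B \<and> A \<noteq> B"

definition regular_bip :: "('a \<Rightarrow> 'a \<Rightarrow> bool) \<Rightarrow> 'a set \<Rightarrow> 'a set \<Rightarrow> bool" where
  "regular_bip le A B \<longleftrightarrow> (\<forall>a\<in>A. \<forall>b\<in>B. less_p le a b \<longrightarrow>
      (\<exists>f. bij_betw f A B \<and> (\<forall>x\<in>A. less_p le x (f x)) \<and> f a = b))"

text \<open>Antichains As!p \<sqsubset> As!s are consecutive in the linear order on {As!0, ..., As!(t-1)}
  (0-based indexing: As!0 = A_1, the prefix of length t is A_1..A_t).\<close>
definition consecutive :: "'a set \<Rightarrow> ('a \<Rightarrow> 'a \<Rightarrow> bool) \<Rightarrow> 'a set list \<Rightarrow> nat \<Rightarrow> nat \<Rightarrow> nat \<Rightarrow> bool" where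
  "consecutive P le As t p s \<longleftrightarrow> p < t \<and> s < t \<and> sq_less P le (As!p) (As!s)
     \<and> \<not> (\<exists>q<t. sq_less P le (As!p) (As!q) \<and> sq_less P le (As!q) (As!s))"

definition regular_poset :: "'a set \<Rightarrow> ('a \<Rightarrow> 'a \<Rightarrow> bool) \<Rightarrow> 'a set list \<Rightarrow> bool" where
  "regular_poset P le As \<longleftrightarrow>
     finite P \<and> poset P le \<and> length As \<ge> 2
   \<and> (\<forall>i<length As. maximum_antichain P le (As!i))
   \<and> (\<forall>i<length As. \<forall>j<length As. i \<noteq> j \<longrightarrow> As!i \<inter> As!j = {})
   \<and> \<Union> (set As) = P
   \<and> (\<forall>i<length As. \<forall>j<length As. sq_le P le (As!i) (As!j) \<or> sq_le P le (As!j) (As!i))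
   \<and> (\<forall>i<length As. sq_le P le (As!0) (As!i) \<and> sq_le P le (As!i) (As!1))
   \<and> (\<forall>a\<in>As!0. \<forall>b\<in>As!1. less_p le a b)
   \<and> (\<forall>t\<in>{2..length As}. \<forall>p s. consecutive P le As t p s \<longrightarrow> regular_bip le (As!p) (As!s))"

definition bip_edge :: "('a \<Rightarrow> 'a \<Rightarrow> bool) \<Rightarrow> 'a set \<Rightarrow> 'a set \<Rightarrow> 'a \<Rightarrow> 'a \<Rightarrow> bool" where
  "bip_edge le A B u v \<longleftrightarrow> (u \<in> A \<and> v \<in> B \<and> less_p le u v) \<or> (v \<in> A \<and> u \<in> B \<and> less_p le v u)"

definition component :: "('a \<Rightarrow> 'a \<Rightarrow> bool) \<Rightarrow> 'a set \<Rightarrow> 'a set \<Rightarrow> 'a \<Rightarrow> 'a set" where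
  "component le A B v = {u. (bip_edge le A B)\<^sup>*\<^sup>* v u}"

definition node :: "'a set \<Rightarrow> ('a \<Rightarrow> 'a \<Rightarrow> bool) \<Rightarrow> 'a set list \<Rightarrow> 'a set \<Rightarrow> 'a set \<Rightarrow> bool" where
  "node P le As X Y \<longleftrightarrow> (\<exists>t\<in>{2..length As}. \<exists>p s. consecutive P le As t p s
      \<and> X \<subseteq> As!p \<and> Y \<subseteq> As!s
      \<and> (\<exists>v\<in>As!p \<union> As!s. X \<union> Y = component le (As!p) (As!s) v))"

end

theory Submission
  imports Defs
begin

text \<open>Every edge of a regular bipartite layer graph extends to a perfect matching, and such a
  matching maps each connected component onto itself, so the two sides X and Y of a node have
  the same size. Given a non-empty B \<subseteq> Y, the set A = X - B\<down> satisfies A\<up> \<inter> Y \<subseteq> Y - B;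
  hence if A is non-empty, the expansion of A forces |A| + k \<le> |Y| - |B|, which with |X| = |Y|
  is |B\<down> \<inter> X| \<ge> |B| + k. Reversing the order exchanges the two conditions.\<close>

definition expands :: "('a \<Rightarrow> 'b \<Rightarrow> bool) \<Rightarrow> 'a set \<Rightarrow> 'b set \<Rightarrow> nat \<Rightarrow> bool" where
  "expands r X Y k \<longleftrightarrow>
     (\<forall>A. A \<subseteq> X \<and> A \<noteq> {} \<longrightarrow> min (card A + k) (card Y) \<le> card {y\<in>Y. \<exists>x\<in>A. r x y})"

lemma expands_converse:
  assumes fin: "finite X" "finite Y" and card_eq: "card X = card Y"
    and exp: "expands r X Y k"
  shows "expands (\<lambda>y x. r x y) Y X k"
  unfolding expands_def
proof (intro allI impI, elim conjE)
  fix B assume B: "B \<subseteq> Y" "B \<noteq> {}"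
  define D where "D = {x\<in>X. \<exists>y\<in>B. r x y}"
  show "min (card B + k) (card X) \<le> card {x\<in>X. \<exists>y\<in>B. r x y}"
  proof (cases "D = X")
    case True
    then show ?thesis by (simp add: D_def)
  next
    case False
    define A where "A = X - D"
    have "A \<subseteq> X" "A \<noteq> {}"
      using False by (auto simp: A_def D_def)
    then have expA: "min (card A + k) (card Y) \<le> card {y\<in>Y. \<exists>x\<in>A. r x y}"
      using exp by (simp add: expands_def)
    have "{y\<in>Y. \<exists>x\<in>A. r x y} \<subseteq> Y - B"
      by (auto simp: A_def D_def)
    then have "card {y\<in>Y. \<exists>x\<in>A. r x y} \<le> card Y - card B"
      using card_mono[of "Y - B"] card_Diff_subset[OF finite_subset[OF B(1) fin(2)] B(1)] fin(2)
      by simp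
    moreover have "0 < card B"
      using B fin(2) finite_subset card_gt_0_iff by blast
    moreover have "card A = card X - card D" "card D \<le> card X"
      using fin(1) card_Diff_subset[of D X] card_mono[of X D] by (auto simp: A_def D_def)
    ultimately show ?thesis
      using expA card_eq unfolding D_def by linarith
  qed
qed

lemma expands_iff_converse:
  assumes "finite X" "finite Y" "card X = card Y"
  shows "expands r X Y k \<longleftrightarrow> expands (\<lambda>y x. r x y) Y X k"
  using expands_converse[OF assms] expands_converse[of Y X "\<lambda>y x. r x y"] assms by auto

lemma up_set_Int: "Y \<subseteq> P \<Longrightarrow> up_set P le A \<inter> Y = {y\<in>Y. \<exists>x\<in>A. le x y}"
  unfolding up_set_def by auto

lemma down_set_Int: "X \<subseteq> P \<Longrightarrow> down_set P le B \<inter> X = {x\<in>X. \<exists>y\<in>B. le x y}"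
  unfolding down_set_def by auto

lemma matching_maps_component_onto_component:
  assumes f: "bij_betw f A B" "\<forall>x\<in>A. less_p le x (f x)"
  shows "f ` (component le A B v \<inter> A) = component le A B v \<inter> B"
proof -
  have fB: "f x \<in> B" if "x \<in> A" for x
    using f(1) that bij_betwE by blast
  have edge: "bip_edge le A B x (f x)" "bip_edge le A B (f x) x" if "x \<in> A" for x
    using that fB f(2) by (auto simp: bip_edge_def)
  show ?thesis
  proof (intro equalityI subsetI)
    fix y assume "y \<in> f ` (component le A B v \<inter> A)"
    then obtain x where "x \<in> A" "x \<in> component le A B v" "y = f x"
      by blast
    then show "y \<in> component le A B v \<inter> B"
      using edge(1) fB by (auto simp: component_def intro: rtranclp.rtrancl_into_rtrancl)
  next
    fix y assume y: "y \<in> component le A B v \<inter> B"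
    then obtain x where "x \<in> A" "y = f x"
      using f(1) by (metis IntD2 bij_betw_imp_surj_on imageE)
    then show "y \<in> f ` (component le A B v \<inter> A)"
      using y edge(2) by (auto simp: component_def intro: rtranclp.rtrancl_into_rtrancl)
  qed
qed

lemma regular_bip_component_card_eq:
  assumes "regular_bip le A B" "a \<in> A" "b \<in> B" "less_p le a b"
  shows "card (component le A B v \<inter> A) = card (component le A B v \<inter> B)"
proof -
  obtain f where f: "bij_betw f A B" "\<forall>x\<in>A. less_p le x (f x)"
    using assms unfolding regular_bip_def by blast
  have "inj_on f (component le A B v \<inter> A)"
    using bij_betw_imp_inj_on[OF f(1)] by (rule inj_on_subset) simp
  then have "card (f ` (component le A B v \<inter> A)) = card (component le A B v \<inter> A)"
    by (rule card_image)
  then show ?thesis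
    by (simp add: matching_maps_component_onto_component[OF f])
qed

lemma consecutive_layers_have_edge:
  assumes R: "regular_poset P le As" and t: "t \<le> length As"
    and c: "consecutive P le As t p s"
  shows "\<exists>a\<in>As!p. \<exists>b\<in>As!s. less_p le a b"
proof -
  have ps: "p < length As" "s < length As" and "As!p \<noteq> As!s"
    and below: "As!p \<subseteq> down_set P le (As!s)"
    using c t by (auto simp: consecutive_def sq_less_def sq_le_def)
  then have "p \<noteq> s"
    by auto
  then have disj: "As!p \<inter> As!s = {}"
    using R ps by (simp add: regular_poset_def)
  have "card (As!p) = card (As!s)"
    using R ps by (simp add: regular_poset_def maximum_antichain_def)
  moreover have "As!s \<subseteq> P" "finite P"
    using R nth_mem[OF ps(2)] by (auto simp: regular_poset_def)
  ultimately have "As!p \<noteq> {}"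
    using \<open>As!p \<noteq> As!s\<close> finite_subset by fastforce
  then obtain a where a: "a \<in> As!p"
    by blast
  then obtain b where "b \<in> As!s" "le a b"
    using below by (auto simp: down_set_def)
  then show ?thesis
    using a disj by (auto simp: less_p_def)
qed

lemma node_card_eq:
  assumes R: "regular_poset P le As" and N: "node P le As X Y"
  shows "card X = card Y" "X \<subseteq> P" "Y \<subseteq> P" "finite X" "finite Y"
proof -
  obtain t p s v where t: "t \<in> {2..length As}" and c: "consecutive P le As t p s"
    and XY: "X \<subseteq> As!p" "Y \<subseteq> As!s" "X \<union> Y = component le (As!p) (As!s) v"
    using N unfolding node_def by blast
  have ps: "p < length As" "s < length As" "p \<noteq> s"
    using c t by (auto simp: consecutive_def sq_less_def)
  have disj: "As!p \<inter> As!s = {}"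
    using R ps by (simp add: regular_poset_def)
  have layers: "As!p \<subseteq> P" "As!s \<subseteq> P" and "finite P"
    using R nth_mem[OF ps(1)] nth_mem[OF ps(2)] by (auto simp: regular_poset_def)
  obtain a b where "a \<in> As!p" "b \<in> As!s" "less_p le a b"
    using consecutive_layers_have_edge[OF R _ c] t by auto
  moreover have "regular_bip le (As!p) (As!s)"
    using R t c by (simp add: regular_poset_def)
  moreover have "X = component le (As!p) (As!s) v \<inter> As!p"
    "Y = component le (As!p) (As!s) v \<inter> As!s"
    using XY disj by blast+
  ultimately show "card X = card Y"
    using regular_bip_component_card_eq by metis
  show "X \<subseteq> P" "Y \<subseteq> P"
    using XY layers by auto
  then show "finite X" "finite Y"
    using \<open>finite P\<close> finite_subset by auto
qed

theorem proposition8: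
  fixes P :: "'a set" and le :: "'a \<Rightarrow> 'a \<Rightarrow> bool" and As :: "'a set list"
    and X Y :: "'a set" and k :: nat
  assumes "regular_poset P le As"
    and "node P le As X Y"
  shows "(\<forall>A. A \<subseteq> X \<and> A \<noteq> {} \<longrightarrow> card (up_set P le A \<inter> Y) \<ge> min (card A + k) (card Y))
     \<longleftrightarrow> (\<forall>B. B \<subseteq> Y \<and> B \<noteq> {} \<longrightarrow> card (down_set P le B \<inter> X) \<ge> min (card B + k) (card X))"
proof -
  note XY = node_card_eq[OF assms]
  have "expands le X Y k \<longleftrightarrow> expands (\<lambda>y x. le x y) Y X k"
    using expands_iff_converse XY by blast
  then show ?thesis
    using up_set_Int[OF XY(3), of le] down_set_Int[OF XY(2), of le] by (simp add: expands_def)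
qed

end
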